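(* Let $\mathbb F$ be a field, let $\chi,\eta\in\mathbb F[x]$ be monic polynomials of degree $l\ge1$, and let $a,b,c,d\in\mathbb F$ with $ad-bc\ne0$. (a) If the matrix pair $(aI_l+b\Phi_\chi,\ cI_l+d\Phi_\chi)$ is equivalent to the pair $(I_l,\Phi_\eta)$, then \[ \eta(x)=\varepsilon\,(d-xb)^l\,\chi\!\left(\frac{xa-c}{d-xb}\right) \] for some $\varepsilon\in\mathbb F$. (b) If $aI_l+b\Phi_\chi$ is nonsingular and $\eta(x)=\varepsilon\,(d-xb)^l\,\chi\!\left(\frac{xa-c}{d-xb}\right)$ for some $\varepsilon\in\mathbb F$, then the characteristic polynomials of $(cI_l+d\Phi_\chi)(aI_l+b\Phi_\chi)^{-1}$ and of $\Phi_\eta$ are equal.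
   Context: For a monic $\chi(x)=x^l-u_1x^{l-1}-\dots-u_l\in\mathbb F[x]$, $l\ge1$, $\Phi_\chi$ is the $l\times l$ companion matrix with ones on the subdiagonal, last column $(u_l,\dots,u_2,u_1)^T$ (top to bottom), and zeros elsewhere; its characteristic polynomial is $\chi$. Two pairs $(A,B)$, $(A',B')$ of matrices of the same size are equivalent if there exist nonsingular $P,Q$ with $A'=PAQ$ and $B'=PBQ$. The expression $(d-xb)^l\chi\left(\frac{xa-c}{d-xb}\right)$ denotes the polynomial obtained by clearing denominators (a polynomial since $\deg\chi=l$). *)

theory Defs
  imports "Jordan_Normal_Form.Char_Poly"
begin

text \<open>Companion matrix of a monic polynomial chi of degree l (0-indexed rows/columns):
  ones on the subdiagonal, last column (u_l, ..., u_1) top to bottom, where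
  chi = x^l - u_1 x^(l-1) - ... - u_l, i.e. u_k = - coeff chi (l - k);
  so row i of the last column holds u_(l-i) = - coeff chi i.\<close>
definition companion :: "'a::comm_ring_1 poly \<Rightarrow> 'a mat" where
  "companion chi = (let l = degree chi in
     mat l l (\<lambda>(i, j). if j = l - 1 then - coeff chi i
                       else if i = j + 1 then 1 else 0))"

definition pair_equiv :: "'a::semiring_1 mat \<Rightarrow> 'a mat \<Rightarrow> 'a mat \<Rightarrow> 'a mat \<Rightarrow> bool" where
  "pair_equiv A B A' B' \<longleftrightarrow>
     (\<exists>P Q. P \<in> carrier_mat (dim_row A) (dim_row A) \<and> Q \<in> carrier_mat (dim_col A) (dim_col A) \<and>
            invertible_mat P \<and> invertible_mat Q \<and> A' = P * A * Q \<and> B' = P * B * Q)"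

text \<open>(d - x b)^l chi((x a - c)/(d - x b)) with denominators cleared:
  sum over i of coeff chi i * (x a - c)^i * (d - x b)^(l - i).\<close>
definition mobius_poly :: "'a::comm_ring_1 \<Rightarrow> 'a \<Rightarrow> 'a \<Rightarrow> 'a \<Rightarrow> nat \<Rightarrow> 'a poly \<Rightarrow> 'a poly" where
  "mobius_poly a b c d l chi =
     (\<Sum>i\<le>l. Polynomial.smult (coeff chi i) ([:-c, a:] ^ i * [:d, -b:] ^ (l - i)))"

end

theory Submission
  imports Defs
begin

text \<open>Both parts rest on the determinant of the pencil \<open>x A - B\<close>. For
  \<open>A = a I + b \<Phi>\<^sub>\<chi>\<close>, \<open>B = c I + d \<Phi>\<^sub>\<chi>\<close> this matrix is \<open>(x a - c) I - (d - x b) \<Phi>\<^sub>\<chi>\<close>,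
  and a cofactor expansion along the first row shows its determinant to be the homogenized
  characteristic polynomial \<open>(d - x b)\<^sup>l \<chi>((x a - c)/(d - x b))\<close>. Multiplying the pencil
  on both sides by constant invertible matrices only scales its determinant, which gives (a)
  with \<open>\<Phi>\<^sub>\<eta> = P B Q\<close>, \<open>I = P A Q\<close>, and gives (b) with \<open>P = I\<close>, \<open>Q = A\<close>, since
  \<open>x A - B = (x I - B A\<^sup>-\<^sup>1) A\<close>; comparing leading coefficients of the monic polynomials
  then fixes the scalar.\<close>

definition companion_coeffs :: "(nat \<Rightarrow> 'a::comm_ring_1) \<Rightarrow> nat \<Rightarrow> 'a mat" where
  "companion_coeffs u n =
     mat n n (\<lambda>(i, j). if j = n - 1 then - u i else if i = j + 1 then 1 else 0)"

lemma companion_eq_companion_coeffs: "companion chi = companion_coeffs (coeff chi) (degree chi)"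
  unfolding companion_def companion_coeffs_def Let_def by simp

lemma dim_companion_coeffs [simp]:
  "dim_row (companion_coeffs u n) = n" "dim_col (companion_coeffs u n) = n"
  unfolding companion_coeffs_def by simp_all

lemma companion_coeffs_carrier [simp]: "companion_coeffs u n \<in> carrier_mat n n"
  unfolding carrier_mat_def by simp

lemma companion_carrier: "companion chi \<in> carrier_mat (degree chi) (degree chi)"
  unfolding companion_eq_companion_coeffs by simp

lemma companion_coeffs_index [simp]:
  assumes "i < n" "j < n"
  shows "companion_coeffs u n $$ (i, j) = (if j = n - 1 then - u i else if i = j + 1 then 1 else 0)"
  using assms unfolding companion_coeffs_def by simp

lemma companion_coeffs_pencil_delete_first:
  "mat_delete (p \<cdot>\<^sub>m 1\<^sub>m (Suc n) - q \<cdot>\<^sub>m companion_coeffs u (Suc n)) 0 0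
    = p \<cdot>\<^sub>m 1\<^sub>m n - q \<cdot>\<^sub>m companion_coeffs (\<lambda>i. u (Suc i)) n"
  by (rule eq_matI) (auto simp: mat_delete_def)

lemma det_companion_coeffs_pencil_delete_last:
  "det (mat_delete (p \<cdot>\<^sub>m 1\<^sub>m (Suc n) - q \<cdot>\<^sub>m companion_coeffs u (Suc n)) 0 n) = (- q) ^ n"
proof -
  let ?D = "mat_delete (p \<cdot>\<^sub>m 1\<^sub>m (Suc n) - q \<cdot>\<^sub>m companion_coeffs u (Suc n)) 0 n"
  have carrier: "?D \<in> carrier_mat n n" by (simp add: mat_delete_def)
  have "upper_triangular ?D"
    unfolding upper_triangular_def by (auto simp: mat_delete_def)
  moreover have "diag_mat ?D = replicate n (- q)"
    by (rule nth_equalityI) (auto simp: diag_mat_def mat_delete_def)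
  ultimately show ?thesis using det_upper_triangular[OF _ carrier] by simp
qed

lemma det_companion_coeffs_pencil:
  "det (p \<cdot>\<^sub>m 1\<^sub>m n - q \<cdot>\<^sub>m companion_coeffs u n) = p ^ n + (\<Sum>i<n. u i * p ^ i * q ^ (n - i))"
proof (induction n arbitrary: u)
  case 0
  have "p \<cdot>\<^sub>m 1\<^sub>m 0 - q \<cdot>\<^sub>m companion_coeffs u 0 = 1\<^sub>m 0" by (rule eq_matI) auto
  then show ?case by simp
next
  case (Suc n)
  define A where "A = p \<cdot>\<^sub>m 1\<^sub>m (Suc n) - q \<cdot>\<^sub>m companion_coeffs u (Suc n)"
  have A: "A \<in> carrier_mat (Suc n) (Suc n)" unfolding A_def by auto
  have first_row: "A $$ (0, j) = (if j = 0 then p else 0) + (if j = n then q * u 0 else 0)"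
    if "j < Suc n" for j
    using that unfolding A_def by auto
  have "det A = (\<Sum>j<Suc n. A $$ (0, j) * cofactor A 0 j)"
    by (rule laplace_expansion_row[OF A]) auto
  also have "\<dots> = (\<Sum>j<Suc n. (if j = 0 then p * cofactor A 0 0 else 0)
      + (if j = n then q * u 0 * cofactor A 0 n else 0))"
    by (rule sum.cong) (auto simp: first_row distrib_right)
  also have "\<dots> = p * cofactor A 0 0 + q * u 0 * cofactor A 0 n"
    by (simp add: sum.distrib)
  also have "cofactor A 0 n = q ^ n"
    using det_companion_coeffs_pencil_delete_last[of p n q u]
    by (simp add: cofactor_def A_def flip: power_mult_distrib)
  also have "cofactor A 0 0 = p ^ n + (\<Sum>i<n. u (Suc i) * p ^ i * q ^ (n - i))"
    unfolding cofactor_def A_def companion_coeffs_pencil_delete_first Suc.IH by simp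
  finally have "det A = p * (p ^ n + (\<Sum>i<n. u (Suc i) * p ^ i * q ^ (n - i))) + q * u 0 * q ^ n" .
  moreover have "(\<Sum>i<Suc n. u i * p ^ i * q ^ (Suc n - i))
      = u 0 * q ^ Suc n + (\<Sum>i<n. u (Suc i) * p ^ Suc i * q ^ (n - i))"
    by (subst sum.lessThan_Suc_shift) simp
  ultimately show ?case
    by (simp add: A_def sum_distrib_left algebra_simps)
qed

interpretation const_poly_hom: comm_ring_hom "\<lambda>x::'a::comm_ring_1. [:x:]"
  by unfold_locales auto

definition pencil_det :: "'a::comm_ring_1 mat \<Rightarrow> 'a mat \<Rightarrow> 'a poly" where
  "pencil_det A B = det ([:0, 1:] \<cdot>\<^sub>m map_mat (\<lambda>x. [:x:]) A - map_mat (\<lambda>x. [:x:]) B)"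

lemma char_poly_eq_pencil_det:
  assumes "A \<in> carrier_mat n n"
  shows "char_poly A = pencil_det (1\<^sub>m n) A"
proof -
  have "char_poly_matrix A = [:0, 1:] \<cdot>\<^sub>m map_mat (\<lambda>x. [:x:]) (1\<^sub>m n) - map_mat (\<lambda>x. [:x:]) A"
    by (rule eq_matI) (use assms in \<open>auto simp: char_poly_matrix_def\<close>)
  then show ?thesis unfolding char_poly_def pencil_det_def by simp
qed

lemma mult_smult_minus_mult_mat:
  fixes x :: "'a::comm_ring_1"
  assumes "P \<in> carrier_mat n n" "A \<in> carrier_mat n n" "B \<in> carrier_mat n n" "Q \<in> carrier_mat n n"
  shows "P * (x \<cdot>\<^sub>m A - B) * Q = x \<cdot>\<^sub>m (P * A * Q) - P * B * Q"
proof -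
  have "P * (x \<cdot>\<^sub>m A - B) = x \<cdot>\<^sub>m (P * A) - P * B"
    using mult_minus_distrib_mat[OF assms(1) smult_carrier_mat[OF assms(2)] assms(3)]
      mult_smult_distrib[OF assms(1,2)] by simp
  moreover have "(x \<cdot>\<^sub>m (P * A) - P * B) * Q = x \<cdot>\<^sub>m (P * A * Q) - P * B * Q"
    using minus_mult_distrib_mat[OF smult_carrier_mat mult_carrier_mat[OF assms(1,3)] assms(4)]
      mult_smult_assoc_mat[OF mult_carrier_mat[OF assms(1,2)] assms(4)] assms by simp
  ultimately show ?thesis by simp
qed

lemma pencil_det_mult:
  assumes "P \<in> carrier_mat n n" "A \<in> carrier_mat n n" "B \<in> carrier_mat n n" "Q \<in> carrier_mat n n"
  shows "pencil_det (P * A * Q) (P * B * Q) = Polynomial.smult (det P * det Q) (pencil_det A B)"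
proof -
  let ?h = "map_mat (\<lambda>x. [:x:])"
  have h_mult: "?h (X * Y * Z) = ?h X * ?h Y * ?h Z"
    if "X \<in> carrier_mat n n" "Y \<in> carrier_mat n n" "Z \<in> carrier_mat n n" for X Y Z
    using map_poly_mult(1)[OF mult_carrier_mat[OF that(1,2)] that(3)] map_poly_mult(1)[OF that(1,2)]
    by simp
  let ?N = "[:0, 1:] \<cdot>\<^sub>m ?h A - ?h B"
  have N: "?N \<in> carrier_mat n n" and hP: "?h P \<in> carrier_mat n n" and hQ: "?h Q \<in> carrier_mat n n"
    using assms by auto
  have "[:0, 1:] \<cdot>\<^sub>m ?h (P * A * Q) - ?h (P * B * Q) = ?h P * ?N * ?h Q"
    unfolding h_mult[OF assms(1,2,4)] h_mult[OF assms(1,3,4)]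
    by (rule mult_smult_minus_mult_mat[symmetric]) (use assms in auto)
  then have "pencil_det (P * A * Q) (P * B * Q) = det (?h P) * pencil_det A B * det (?h Q)"
    unfolding pencil_det_def
    by (simp only: det_mult[OF mult_carrier_mat[OF hP N] hQ] det_mult[OF hP N])
  then show ?thesis by (simp add: ac_simps)
qed

lemma pencil_det_right_inverse:
  assumes "A \<in> carrier_mat n n" "B \<in> carrier_mat n n" "M \<in> carrier_mat n n" "M * A = 1\<^sub>m n"
  shows "pencil_det A B = Polynomial.smult (det A) (char_poly (B * M))"
proof -
  have "1\<^sub>m n * (B * M) * A = B"
    using assms by (simp add: assoc_mult_mat[of B n n M n A n])
  then have "pencil_det A B = pencil_det (1\<^sub>m n * 1\<^sub>m n * A) (1\<^sub>m n * (B * M) * A)"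
    using assms by simp
  also have "\<dots> = Polynomial.smult (det (1\<^sub>m n) * det A) (pencil_det (1\<^sub>m n) (B * M))"
    using assms by (intro pencil_det_mult) auto
  also have "\<dots> = Polynomial.smult (det A) (char_poly (B * M))"
    using assms by (simp add: char_poly_eq_pencil_det[of "B * M" n])
  finally show ?thesis .
qed

lemma pencil_det_companion:
  assumes "monic chi" "degree chi = l"
  shows "pencil_det (a \<cdot>\<^sub>m 1\<^sub>m l + b \<cdot>\<^sub>m companion chi) (c \<cdot>\<^sub>m 1\<^sub>m l + d \<cdot>\<^sub>m companion chi)
    = mobius_poly a b c d l chi"
proof -
  have "[:0, 1:] \<cdot>\<^sub>m map_mat (\<lambda>x. [:x:]) (a \<cdot>\<^sub>m 1\<^sub>m l + b \<cdot>\<^sub>m companion chi)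
      - map_mat (\<lambda>x. [:x:]) (c \<cdot>\<^sub>m 1\<^sub>m l + d \<cdot>\<^sub>m companion chi)
    = [:- c, a:] \<cdot>\<^sub>m 1\<^sub>m l - [:d, - b:] \<cdot>\<^sub>m companion_coeffs (\<lambda>i. [:coeff chi i:]) l"
    by (rule eq_matI) (auto simp: companion_eq_companion_coeffs companion_coeffs_def assms(2))
  then show ?thesis
    using assms
    by (simp add: pencil_det_def det_companion_coeffs_pencil mobius_poly_def
        lessThan_Suc_atMost[symmetric] mult.assoc)
qed

lemma char_poly_companion:
  assumes "monic eta"
  shows "char_poly (companion eta) = eta"
proof -
  let ?l = "degree eta"
  have "char_poly (companion eta) = pencil_det (1\<^sub>m ?l) (companion eta)"
    using companion_carrier by (rule char_poly_eq_pencil_det)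
  also have "\<dots> = pencil_det (1 \<cdot>\<^sub>m 1\<^sub>m ?l + 0 \<cdot>\<^sub>m companion eta) (0 \<cdot>\<^sub>m 1\<^sub>m ?l + 1 \<cdot>\<^sub>m companion eta)"
    by (intro arg_cong2[where f = pencil_det] eq_matI) (use companion_carrier[of eta] in auto)
  also have "\<dots> = mobius_poly 1 0 0 1 ?l eta"
    using assms by (rule pencil_det_companion) simp
  also have "\<dots> = (\<Sum>i\<le>?l. monom (coeff eta i) i)"
    unfolding mobius_poly_def by (simp add: monom_altdef)
  also have "\<dots> = eta" by (rule poly_as_sum_of_monoms)
  finally show ?thesis .
qed

lemma pair_equiv_one_char_poly:
  assumes "A \<in> carrier_mat n n" "B \<in> carrier_mat n n" "pair_equiv A B (1\<^sub>m n) C"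
  shows "\<exists>e. char_poly C = Polynomial.smult e (pencil_det A B)"
proof -
  obtain P Q where P: "P \<in> carrier_mat n n" and Q: "Q \<in> carrier_mat n n"
    and PAQ: "1\<^sub>m n = P * A * Q" and PBQ: "C = P * B * Q"
    using assms(3) unfolding pair_equiv_def carrier_matD[OF assms(1)] by blast
  have "char_poly C = pencil_det (1\<^sub>m n) C"
    unfolding PBQ using P assms(2) Q by (intro char_poly_eq_pencil_det mult_carrier_mat)
  also have "\<dots> = pencil_det (P * A * Q) (P * B * Q)" by (simp only: PAQ PBQ)
  also have "\<dots> = Polynomial.smult (det P * det Q) (pencil_det A B)"
    by (rule pencil_det_mult[OF P assms(1,2) Q])
  finally show ?thesis by blast
qed

lemma monic_smult_pencil_det_eq_char_poly:
  fixes p :: "'a::idom poly"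
  assumes "A \<in> carrier_mat n n" "B \<in> carrier_mat n n" "M \<in> carrier_mat n n" "M * A = 1\<^sub>m n"
    and "monic p" "p = Polynomial.smult e (pencil_det A B)"
  shows "p = char_poly (B * M)"
proof -
  have p: "p = Polynomial.smult (e * det A) (char_poly (B * M))"
    using assms(6) pencil_det_right_inverse[OF assms(1-4)] by simp
  have "monic (char_poly (B * M))"
    using degree_monic_char_poly[OF mult_carrier_mat[OF assms(2,3)]] by simp
  moreover have "lead_coeff p = e * det A * lead_coeff (char_poly (B * M))"
    unfolding p by (rule lead_coeff_smult)
  ultimately have "e * det A = 1"
    using assms(5) by simp
  then show ?thesis using p by simp
qed

theorem lemma2:
  fixes chi eta :: "'a::field poly" and a b c d :: 'a and l :: nat
  assumes "monic chi" and "monic eta"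
    and "degree chi = l" and "degree eta = l" and "l \<ge> 1"
    and "a * d - b * c \<noteq> 0"
  shows "(pair_equiv (a \<cdot>\<^sub>m 1\<^sub>m l + b \<cdot>\<^sub>m companion chi) (c \<cdot>\<^sub>m 1\<^sub>m l + d \<cdot>\<^sub>m companion chi)
                     (1\<^sub>m l) (companion eta)
           \<longrightarrow> (\<exists>\<epsilon>. eta = Polynomial.smult \<epsilon> (mobius_poly a b c d l chi)))
       \<and> (invertible_mat (a \<cdot>\<^sub>m 1\<^sub>m l + b \<cdot>\<^sub>m companion chi)
           \<and> (\<exists>\<epsilon>. eta = Polynomial.smult \<epsilon> (mobius_poly a b c d l chi))
           \<longrightarrow> (\<forall>M. inverts_mat (a \<cdot>\<^sub>m 1\<^sub>m l + b \<cdot>\<^sub>m companion chi) M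
                     \<and> inverts_mat M (a \<cdot>\<^sub>m 1\<^sub>m l + b \<cdot>\<^sub>m companion chi)
                     \<and> M \<in> carrier_mat l l
                  \<longrightarrow> char_poly ((c \<cdot>\<^sub>m 1\<^sub>m l + d \<cdot>\<^sub>m companion chi) * M) = char_poly (companion eta)))"
proof -
  define A where "A = a \<cdot>\<^sub>m 1\<^sub>m l + b \<cdot>\<^sub>m companion chi"
  define B where "B = c \<cdot>\<^sub>m 1\<^sub>m l + d \<cdot>\<^sub>m companion chi"
  have A: "A \<in> carrier_mat l l" and B: "B \<in> carrier_mat l l"
    unfolding A_def B_def using companion_carrier[of chi] assms(3) by auto
  have mobius: "pencil_det A B = mobius_poly a b c d l chi"
    unfolding A_def B_def using assms(1,3) by (rule pencil_det_companion)
  have eta: "char_poly (companion eta) = eta"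
    using assms(2) by (rule char_poly_companion)
  have "pair_equiv A B (1\<^sub>m l) (companion eta)
    \<longrightarrow> (\<exists>\<epsilon>. eta = Polynomial.smult \<epsilon> (mobius_poly a b c d l chi))"
    using pair_equiv_one_char_poly[OF A B, of "companion eta"] unfolding eta mobius by blast
  moreover have "char_poly (B * M) = char_poly (companion eta)"
    if "eta = Polynomial.smult \<epsilon> (mobius_poly a b c d l chi)" "inverts_mat M A" "M \<in> carrier_mat l l"
    for \<epsilon> M
    using monic_smult_pencil_det_eq_char_poly[OF A B, of M eta \<epsilon>] that assms(2)
    unfolding eta mobius inverts_mat_def carrier_matD[OF A] by simp
  ultimately show ?thesis
    unfolding A_def[symmetric] B_def[symmetric] by blast
qed

end
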